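(* For the order-$M$ Tensor Train model described in the context, the boundary ranks are identifiable via $$r_1=\frac{v_{\{1,2\}}\,v_{\{3\}}}{v_{\{2\}}\,v_{\{1,3\}}}\quad(M\ge3),\qquad r_{M-1}=\frac{v_{\{M-1,M\}}\,v_{\{M-3\}}}{v_{\{M\}}\,v_{\{M-3,M-1\}}}\quad(M\ge4).$$
   Context: Tensor Train (TT) model of order $M$ with TT-ranks $(r_1,\dots,r_{M-1})$: $\eta_{i_1\dots i_M}=\sum_{k_1=1}^{r_1}\cdots\sum_{k_{M-1}=1}^{r_{M-1}}\theta^{(1)}_{1,i_1,k_1}\theta^{(2)}_{k_1,i_2,k_2}\cdots\theta^{(M)}_{k_{M-1},i_M,1}$, where the entries of core $p$ are i.i.d. with mean $\mu_p$ and variance $\sigma_p^2$, independent across cores. Conditional on $\boldsymbol\eta$, the $Y_{\mathbf i}$ are independent with $\mathbb E[Y_{\mathbf i}\mid\boldsymbol\eta]=\eta_{\mathbf i}$. For $S\subseteq\{1,\dots,M\}$, $C_S:=\mathrm{Cov}(Y_{\mathbf i},Y_{\mathbf j})$ for multi-indices with $i_k=j_k$ for $k\in S$ and $i_k\ne j_k$ for $k\notin S$, with $C_\emptyset=0$; $v_S:=\sum_{S'\subseteq S}(-1)^{|S|-|S'|}C_{S'}$. *)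

theory Defs
  imports "HOL-Probability.Probability"
begin

text \<open>Modes are 1..m, with mode sizes n p.
  Bond dimensions: bond 0 = bond m = 1 and bond k = r k for 0 < k < m.
  Core entries theta p a i b with a < bond (p-1), i < n p, b < bond p (0-based).\<close>

definition bond :: "nat \<Rightarrow> (nat \<Rightarrow> nat) \<Rightarrow> nat \<Rightarrow> nat" where
  "bond m r k = (if 0 < k \<and> k < m then r k else 1)"

definition bond_tuples :: "nat \<Rightarrow> (nat \<Rightarrow> nat) \<Rightarrow> (nat \<Rightarrow> nat) set" where
  "bond_tuples m r = {k. \<forall>j. k j < bond m r j}"

definition multi_idx :: "nat \<Rightarrow> (nat \<Rightarrow> nat) \<Rightarrow> (nat \<Rightarrow> nat) set" where
  "multi_idx m n = {i. \<forall>p. i p < (if p \<in> {1..m} then n p else 1)}"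

definition core_entries :: "nat \<Rightarrow> (nat \<Rightarrow> nat) \<Rightarrow> (nat \<Rightarrow> nat) \<Rightarrow> (nat \<times> nat \<times> nat \<times> nat) set" where
  "core_entries m n r = {(p, a, i, b). p \<in> {1..m} \<and> a < bond m r (p - 1) \<and> i < n p \<and> b < bond m r p}"

definition tt_eta :: "nat \<Rightarrow> (nat \<Rightarrow> nat) \<Rightarrow> (nat \<Rightarrow> nat \<Rightarrow> nat \<Rightarrow> nat \<Rightarrow> 'a \<Rightarrow> real)
    \<Rightarrow> (nat \<Rightarrow> nat) \<Rightarrow> 'a \<Rightarrow> real" where
  "tt_eta m r \<theta> i \<omega> = (\<Sum>k\<in>bond_tuples m r. \<Prod>p\<in>{1..m}. \<theta> p (k (p - 1)) (i p) (k p) \<omega>)"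

definition cov :: "'a measure \<Rightarrow> ('a \<Rightarrow> real) \<Rightarrow> ('a \<Rightarrow> real) \<Rightarrow> real" where
  "cov P X Z = (\<integral>\<omega>. (X \<omega> - (\<integral>x. X x \<partial>P)) * (Z \<omega> - (\<integral>x. Z x \<partial>P)) \<partial>P)"

definition gen_sigma :: "'a measure \<Rightarrow> ('i \<Rightarrow> 'a \<Rightarrow> real) \<Rightarrow> 'i set \<Rightarrow> 'a measure" where
  "gen_sigma P X I = sigma (space P)
     {X i -` A \<inter> space P | i A. i \<in> I \<and> A \<in> sets (borel :: real measure)}"

definition cond_indep_given :: "'a measure \<Rightarrow> 'a measure \<Rightarrow> ('i \<Rightarrow> 'a \<Rightarrow> real) \<Rightarrow> 'i set \<Rightarrow> bool" where
  "cond_indep_given P F Y I \<longleftrightarrow>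
    (\<forall>J (f :: 'i \<Rightarrow> real \<Rightarrow> real).
       finite J \<and> J \<subseteq> I \<and>
       (\<forall>i\<in>J. f i \<in> borel_measurable borel \<and> integrable P (\<lambda>\<omega>. f i (Y i \<omega>))) \<and>
       integrable P (\<lambda>\<omega>. \<Prod>i\<in>J. f i (Y i \<omega>)) \<longrightarrow>
       (AE \<omega> in P. real_cond_exp P F (\<lambda>\<omega>. \<Prod>i\<in>J. f i (Y i \<omega>)) \<omega>
                   = (\<Prod>i\<in>J. real_cond_exp P F (\<lambda>\<omega>. f i (Y i \<omega>)) \<omega>)))"

definition agree_on :: "nat \<Rightarrow> nat set \<Rightarrow> (nat \<Rightarrow> nat) \<Rightarrow> (nat \<Rightarrow> nat) \<Rightarrow> bool" where
  "agree_on m S i j \<longleftrightarrow> (\<forall>p\<in>{1..m}. (p \<in> S \<longleftrightarrow> i p = j p))"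

definition C_cov :: "'a measure \<Rightarrow> ((nat \<Rightarrow> nat) \<Rightarrow> 'a \<Rightarrow> real) \<Rightarrow> nat \<Rightarrow> (nat \<Rightarrow> nat)
    \<Rightarrow> nat set \<Rightarrow> real" where
  "C_cov P Y m n S = (if S = {} then 0 else
     (let ij = (SOME ij. fst ij \<in> multi_idx m n \<and> snd ij \<in> multi_idx m n \<and> agree_on m S (fst ij) (snd ij))
      in cov P (Y (fst ij)) (Y (snd ij))))"

definition v_mob :: "'a measure \<Rightarrow> ((nat \<Rightarrow> nat) \<Rightarrow> 'a \<Rightarrow> real) \<Rightarrow> nat \<Rightarrow> (nat \<Rightarrow> nat)
    \<Rightarrow> nat set \<Rightarrow> real" where
  "v_mob P Y m n S = (\<Sum>S'\<in>Pow S. (-1) ^ (card S - card S') * C_cov P Y m n S')"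

end

theory Submission
  imports Defs
begin

(* Conditionally on \<eta> the observations are independent with means \<eta>\<^sub>i, so Cov(Y\<^sub>i, Y\<^sub>j) =
   Cov(\<eta>\<^sub>i, \<eta>\<^sub>j) for i \<noteq> j. Writing \<eta>\<^sub>i as a sum over bond tuples k of products of core entries
   along the path (i, k) and using the independence of the entries, Cov(\<eta>\<^sub>i, \<eta>\<^sub>j) is the sum over
   pairs (k, k') of \<Prod>\<^sub>p (\<mu>\<^sub>p\<^sup>2 + [both paths use the same entry of core p] \<sigma>\<^sub>p\<^sup>2) - \<Prod>\<^sub>p \<mu>\<^sub>p\<^sup>2.
   If i and j agree exactly on S, the paths share the entry of core p iff p \<in> S and k, k' agree on
   both bonds of core p. Expanding the product and counting the agreeing pairs of bond tuples gives
   C\<^sub>S = \<Sum> W\<^sub>T over nonempty T \<subseteq> S, where W\<^sub>T is the product of \<sigma>\<^sub>p\<^sup>2 over p \<in> T, of \<mu>\<^sub>p\<^sup>2 over the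
   other cores, and of r\<^sub>j or r\<^sub>j\<^sup>2 over the bonds j according as a neighbouring core j or j + 1 lies
   in T or not. Moebius inversion gives v\<^sub>S = W\<^sub>S for nonempty proper S, and in both quotients all
   factors cancel except a single r. *)

section \<open>Pairs of bond tuples\<close>

lemma mem_bond_tuples_iff:
  "k \<in> bond_tuples m r \<longleftrightarrow> (\<forall>j\<in>{1..<m}. k j < r j) \<and> (\<forall>j. j \<notin> {1..<m} \<longrightarrow> k j = 0)"
proof -
  have "k j < bond m r j \<longleftrightarrow> (j \<in> {1..<m} \<longrightarrow> k j < r j) \<and> (j \<notin> {1..<m} \<longrightarrow> k j = 0)" for j
    by (auto simp: bond_def)
  then show ?thesis
    unfolding bond_tuples_def by blast
qed

lemma finite_bond_tuples: "finite (bond_tuples m r)"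
proof (rule finite_subset)
  show "bond_tuples m r \<subseteq>
      {k. \<forall>j. (j \<in> {1..<m} \<longrightarrow> k j \<in> (\<Union>j\<in>{1..<m}. {..<r j})) \<and> (j \<notin> {1..<m} \<longrightarrow> k j = 0)}"
    by (auto simp: mem_bond_tuples_iff) (meson atLeastLessThan_iff Suc_le_eq)
  show "finite \<dots>"
    by (rule finite_set_of_finite_funs) auto
qed

definition agree_at_cores :: "nat set \<Rightarrow> (nat \<Rightarrow> nat) \<Rightarrow> (nat \<Rightarrow> nat) \<Rightarrow> bool" where
  "agree_at_cores X k k' \<longleftrightarrow> (\<forall>p\<in>X. k (p - 1) = k' (p - 1) \<and> k p = k' p)"

definition bond_value_pairs :: "(nat \<Rightarrow> nat) \<Rightarrow> nat set \<Rightarrow> nat \<Rightarrow> (nat \<times> nat) set" where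
  "bond_value_pairs r X j =
     (if j \<in> X \<or> Suc j \<in> X then (\<lambda>a. (a, a)) ` {..<r j} else {..<r j} \<times> {..<r j})"

definition bond_multiplicity :: "(nat \<Rightarrow> nat) \<Rightarrow> nat set \<Rightarrow> nat \<Rightarrow> nat" where
  "bond_multiplicity r X j = (if j \<in> X \<or> Suc j \<in> X then r j else (r j)\<^sup>2)"

lemma agree_at_cores_iff_bonds:
  assumes "k \<in> bond_tuples m r" "k' \<in> bond_tuples m r"
  shows "agree_at_cores X k k' \<longleftrightarrow> (\<forall>j\<in>{1..<m}. j \<in> X \<or> Suc j \<in> X \<longrightarrow> k j = k' j)"
proof
  assume "agree_at_cores X k k'"
  then show "\<forall>j\<in>{1..<m}. j \<in> X \<or> Suc j \<in> X \<longrightarrow> k j = k' j"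
    unfolding agree_at_cores_def by (metis diff_Suc_1)
next
  assume bonds: "\<forall>j\<in>{1..<m}. j \<in> X \<or> Suc j \<in> X \<longrightarrow> k j = k' j"
  have "k j = k' j" if "j \<in> X \<or> Suc j \<in> X" for j
    using bonds that assms by (cases "j \<in> {1..<m}") (auto simp: mem_bond_tuples_iff)
  then show "agree_at_cores X k k'"
    unfolding agree_at_cores_def by (metis Suc_pred' bot_nat_0.not_eq_extremum diff_0_eq_0)
qed

lemma bij_betw_agreeing_bond_pairs:
  "bij_betw (\<lambda>(k, k'). restrict (\<lambda>j. (k j, k' j)) {1..<m})
     {(k, k') \<in> bond_tuples m r \<times> bond_tuples m r. agree_at_cores X k k'}
     (PiE {1..<m} (bond_value_pairs r X))"
proof (rule bij_betw_byWitness[where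
      f' = "\<lambda>f. (\<lambda>j. if j \<in> {1..<m} then fst (f j) else 0, \<lambda>j. if j \<in> {1..<m} then snd (f j) else 0)"])
  let ?A = "{(k, k') \<in> bond_tuples m r \<times> bond_tuples m r. agree_at_cores X k k'}"
  let ?bonds = "\<lambda>(k, k'). restrict (\<lambda>j. (k j, k' j)) {1..<m}"
  let ?tuples = "\<lambda>f. (\<lambda>j. if j \<in> {1..<m} then fst (f j) else 0, \<lambda>j. if j \<in> {1..<m} then snd (f j) else 0)"
  have pairs_iff: "x \<in> bond_value_pairs r X j
      \<longleftrightarrow> fst x < r j \<and> snd x < r j \<and> (j \<in> X \<or> Suc j \<in> X \<longrightarrow> fst x = snd x)" for x j
    by (cases x) (auto simp: bond_value_pairs_def)
  show "\<forall>kk\<in>?A. ?tuples (?bonds kk) = kk"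
    by (auto simp: mem_bond_tuples_iff fun_eq_iff)
  show "\<forall>f\<in>PiE {1..<m} (bond_value_pairs r X). ?bonds (?tuples f) = f"
    by (auto simp: fun_eq_iff PiE_def extensional_def)
  show "?bonds ` ?A \<subseteq> PiE {1..<m} (bond_value_pairs r X)"
  proof (rule image_subsetI)
    fix kk assume "kk \<in> ?A"
    then obtain k k' where kk: "kk = (k, k')" and k: "k \<in> bond_tuples m r" "k' \<in> bond_tuples m r"
      and agree: "agree_at_cores X k k'"
      by blast
    show "?bonds kk \<in> PiE {1..<m} (bond_value_pairs r X)"
      using k agree[unfolded agree_at_cores_iff_bonds[OF k]]
      by (auto simp: kk pairs_iff mem_bond_tuples_iff)
  qed
  show "?tuples ` PiE {1..<m} (bond_value_pairs r X) \<subseteq> ?A"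
  proof (rule image_subsetI)
    fix f assume f: "f \<in> PiE {1..<m} (bond_value_pairs r X)"
    have f_bonds: "fst (f j) < r j \<and> snd (f j) < r j \<and> (j \<in> X \<or> Suc j \<in> X \<longrightarrow> fst (f j) = snd (f j))"
      if "j \<in> {1..<m}" for j
      using f that pairs_iff by (auto simp: PiE_iff)
    have "fst (?tuples f) \<in> bond_tuples m r" "snd (?tuples f) \<in> bond_tuples m r"
      using f_bonds by (auto simp: mem_bond_tuples_iff)
    moreover have "agree_at_cores X (fst (?tuples f)) (snd (?tuples f))"
      using f_bonds by (subst agree_at_cores_iff_bonds[OF calculation]) simp
    ultimately show "?tuples f \<in> ?A"
      by (simp add: case_prod_beta mem_Times_iff)
  qed
qed

lemma card_agreeing_bond_pairs:
  "card {(k, k') \<in> bond_tuples m r \<times> bond_tuples m r. agree_at_cores X k k'}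
     = (\<Prod>j\<in>{1..<m}. bond_multiplicity r X j)"
proof -
  have "card {(k, k') \<in> bond_tuples m r \<times> bond_tuples m r. agree_at_cores X k k'}
      = card (PiE {1..<m} (bond_value_pairs r X))"
    by (rule bij_betw_same_card[OF bij_betw_agreeing_bond_pairs])
  also have "\<dots> = (\<Prod>j\<in>{1..<m}. card (bond_value_pairs r X j))"
    by (rule card_PiE) simp
  also have "\<dots> = (\<Prod>j\<in>{1..<m}. bond_multiplicity r X j)"
    by (intro prod.cong) (auto simp: bond_value_pairs_def bond_multiplicity_def card_image inj_on_def
        card_cartesian_product power2_eq_square)
  finally show ?thesis .
qed

section \<open>The weights of the covariances\<close>

lemma prod_add_minus_prod:
  fixes a b :: "'a \<Rightarrow> 'b::comm_ring_1"
  assumes "finite A"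
  shows "(\<Prod>x\<in>A. a x + b x) - prod a A = (\<Sum>X\<in>Pow A - {{}}. prod b X * prod a (A - X))"
proof -
  have "(\<Prod>x\<in>A. a x + b x) = (\<Sum>X\<in>Pow A. prod b X * prod a (A - X))"
    using prod_add[OF assms, of b a] by (simp add: add.commute)
  also have "\<dots> = prod a A + (\<Sum>X\<in>Pow A - {{}}. prod b X * prod a (A - X))"
    using assms by (subst sum.remove[of _ "{}"]) auto
  finally show ?thesis
    by simp
qed

lemma prod_if_zero:
  fixes f :: "'a \<Rightarrow> 'b::comm_semiring_1"
  assumes "finite A"
  shows "(\<Prod>x\<in>A. if P x then f x else 0) = (if \<forall>x\<in>A. P x then prod f A else 0)"
proof (cases "\<forall>x\<in>A. P x")
  case False
  then show ?thesis
    using assms by (auto intro!: prod_zero)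
qed simp

definition core_moment_weight :: "nat \<Rightarrow> (nat \<Rightarrow> real) \<Rightarrow> (nat \<Rightarrow> real) \<Rightarrow> nat set \<Rightarrow> real" where
  "core_moment_weight m \<mu> \<sigma> T = (\<Prod>p\<in>{1..m}. if p \<in> T then (\<sigma> p)\<^sup>2 else (\<mu> p)\<^sup>2)"

definition tt_weight :: "nat \<Rightarrow> (nat \<Rightarrow> nat) \<Rightarrow> (nat \<Rightarrow> real) \<Rightarrow> (nat \<Rightarrow> real) \<Rightarrow> nat set \<Rightarrow> real" where
  "tt_weight m r \<mu> \<sigma> T = core_moment_weight m \<mu> \<sigma> T * real (\<Prod>j\<in>{1..<m}. bond_multiplicity r T j)"

lemma prod_pair_moments_minus_prod_means:
  fixes \<mu> \<sigma> :: "nat \<Rightarrow> real"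
  assumes S: "S \<subseteq> {1..m}"
  shows "(\<Prod>p\<in>{1..m}. (\<mu> p)\<^sup>2 + (if p \<in> S \<and> agree_at_cores {p} k k' then (\<sigma> p)\<^sup>2 else 0))
           - (\<Prod>p\<in>{1..m}. (\<mu> p)\<^sup>2)
       = (\<Sum>T\<in>Pow S - {{}}. if agree_at_cores T k k' then core_moment_weight m \<mu> \<sigma> T else 0)"
proof -
  have "(\<Prod>p\<in>{1..m}. (\<mu> p)\<^sup>2 + (if p \<in> S \<and> agree_at_cores {p} k k' then (\<sigma> p)\<^sup>2 else 0))
        - (\<Prod>p\<in>{1..m}. (\<mu> p)\<^sup>2)
      = (\<Sum>X\<in>Pow {1..m} - {{}}. (\<Prod>p\<in>X. if p \<in> S \<and> agree_at_cores {p} k k' then (\<sigma> p)\<^sup>2 else 0)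
          * (\<Prod>p\<in>{1..m} - X. (\<mu> p)\<^sup>2))"
    by (rule prod_add_minus_prod) simp
  also have "\<dots> = (\<Sum>X\<in>Pow {1..m} - {{}}.
      if X \<subseteq> S \<and> agree_at_cores X k k' then core_moment_weight m \<mu> \<sigma> X else 0)"
  proof (rule sum.cong[OF refl])
    fix X assume X: "X \<in> Pow {1..m} - {{}}"
    then have "finite X"
      by (auto intro: finite_subset)
    moreover have "core_moment_weight m \<mu> \<sigma> X = (\<Prod>p\<in>X. (\<sigma> p)\<^sup>2) * (\<Prod>p\<in>{1..m} - X. (\<mu> p)\<^sup>2)"
      using X by (simp add: core_moment_weight_def prod.If_cases Int_absorb1 Diff_eq)
    ultimately show "(\<Prod>p\<in>X. if p \<in> S \<and> agree_at_cores {p} k k' then (\<sigma> p)\<^sup>2 else 0)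
        * (\<Prod>p\<in>{1..m} - X. (\<mu> p)\<^sup>2)
        = (if X \<subseteq> S \<and> agree_at_cores X k k' then core_moment_weight m \<mu> \<sigma> X else 0)"
      by (auto simp: prod_if_zero agree_at_cores_def)
  qed
  also have "\<dots> = (\<Sum>T\<in>Pow S - {{}}. if agree_at_cores T k k' then core_moment_weight m \<mu> \<sigma> T else 0)"
    using S by (intro sum.mono_neutral_cong_right) auto
  finally show ?thesis .
qed

lemma sum_bond_pairs_moment_excess:
  fixes \<mu> \<sigma> :: "nat \<Rightarrow> real"
  assumes S: "S \<subseteq> {1..m}"
  shows "(\<Sum>(k, k')\<in>bond_tuples m r \<times> bond_tuples m r.
            (\<Prod>p\<in>{1..m}. (\<mu> p)\<^sup>2 + (if p \<in> S \<and> agree_at_cores {p} k k' then (\<sigma> p)\<^sup>2 else 0))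
            - (\<Prod>p\<in>{1..m}. (\<mu> p)\<^sup>2))
       = (\<Sum>T\<in>Pow S - {{}}. tt_weight m r \<mu> \<sigma> T)"
proof -
  let ?B = "bond_tuples m r \<times> bond_tuples m r"
  let ?g = "core_moment_weight m \<mu> \<sigma>"
  have count: "(\<Sum>(k, k')\<in>?B. if agree_at_cores T k k' then ?g T else 0) = tt_weight m r \<mu> \<sigma> T" for T
  proof -
    have "{kk \<in> ?B. agree_at_cores T (fst kk) (snd kk)} = {(k, k') \<in> ?B. agree_at_cores T k k'}"
      by auto
    then have "(\<Sum>(k, k')\<in>?B. if agree_at_cores T k k' then ?g T else 0)
        = real (card {(k, k') \<in> ?B. agree_at_cores T k k'}) * ?g T"
      using finite_bond_tuples by (simp add: split_def flip: sum.inter_filter)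
    then show ?thesis
      unfolding card_agreeing_bond_pairs tt_weight_def by (simp add: mult.commute)
  qed
  have "(\<Sum>(k, k')\<in>?B. (\<Prod>p\<in>{1..m}. (\<mu> p)\<^sup>2 + (if p \<in> S \<and> agree_at_cores {p} k k' then (\<sigma> p)\<^sup>2 else 0))
            - (\<Prod>p\<in>{1..m}. (\<mu> p)\<^sup>2))
      = (\<Sum>(k, k')\<in>?B. \<Sum>T\<in>Pow S - {{}}. if agree_at_cores T k k' then ?g T else 0)"
    by (simp only: prod_pair_moments_minus_prod_means[OF S])
  also have "\<dots> = (\<Sum>T\<in>Pow S - {{}}. \<Sum>(k, k')\<in>?B. if agree_at_cores T k k' then ?g T else 0)"
    by (subst sum.swap) (simp add: split_def)
  also have "\<dots> = (\<Sum>T\<in>Pow S - {{}}. tt_weight m r \<mu> \<sigma> T)"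
    by (simp only: count)
  finally show ?thesis .
qed

lemma tt_weight_nonzero:
  assumes "\<And>p. p \<in> {1..m} \<Longrightarrow> \<mu> p \<noteq> 0" "\<And>p. p \<in> {1..m} \<Longrightarrow> \<sigma> p \<noteq> 0"
    and "\<And>j. j \<in> {1..<m} \<Longrightarrow> r j \<ge> 1"
  shows "tt_weight m r \<mu> \<sigma> T \<noteq> 0"
  using assms by (auto simp: tt_weight_def core_moment_weight_def bond_multiplicity_def Suc_le_eq)

lemma tt_weight_cross_ratio:
  assumes \<mu>: "\<And>p. p \<in> {1..m} \<Longrightarrow> \<mu> p \<noteq> 0" and \<sigma>: "\<And>p. p \<in> {1..m} \<Longrightarrow> \<sigma> p \<noteq> 0"
    and r: "\<And>j. j \<in> {1..<m} \<Longrightarrow> r j \<ge> 1"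
    and q: "q \<in> {1..<m}"
    and cores: "\<And>p. p \<in> {1..m} \<Longrightarrow> (p \<in> A \<inter> B \<longleftrightarrow> p \<in> C \<inter> D) \<and> (p \<in> A \<union> B \<longleftrightarrow> p \<in> C \<union> D)"
    and bonds: "\<And>j. j \<in> {1..<m} \<Longrightarrow> bond_multiplicity r A j * bond_multiplicity r B j
                  = (if j = q then r q else 1) * (bond_multiplicity r C j * bond_multiplicity r D j)"
  shows "real (r q) = tt_weight m r \<mu> \<sigma> A * tt_weight m r \<mu> \<sigma> B
                       / (tt_weight m r \<mu> \<sigma> C * tt_weight m r \<mu> \<sigma> D)"
proof -
  let ?g = "core_moment_weight m \<mu> \<sigma>"
  let ?b = "\<lambda>T. \<Prod>j\<in>{1..<m}. bond_multiplicity r T j"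
  have "(if p \<in> A then (\<sigma> p)\<^sup>2 else (\<mu> p)\<^sup>2) * (if p \<in> B then (\<sigma> p)\<^sup>2 else (\<mu> p)\<^sup>2)
      = (if p \<in> C then (\<sigma> p)\<^sup>2 else (\<mu> p)\<^sup>2) * (if p \<in> D then (\<sigma> p)\<^sup>2 else (\<mu> p)\<^sup>2)"
    if "p \<in> {1..m}" for p
    using cores[OF that] by (cases "p \<in> A"; cases "p \<in> B"; cases "p \<in> C"; cases "p \<in> D") simp_all
  then have moments: "?g A * ?g B = ?g C * ?g D"
    unfolding core_moment_weight_def by (simp only: prod.distrib[symmetric]) (rule prod.cong[OF refl])
  have "?b A * ?b B = (\<Prod>j\<in>{1..<m}. if j = q then r q else 1) * (?b C * ?b D)"
    by (simp only: prod.distrib[symmetric]) (rule prod.cong[OF refl bonds])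
  also have "(\<Prod>j\<in>{1..<m}. if j = q then r q else 1) = r q"
    using q by (simp add: prod.delta)
  finally have bond_counts: "real (?b A) * real (?b B) = real (r q) * (real (?b C) * real (?b D))"
    by (metis of_nat_mult)
  have "tt_weight m r \<mu> \<sigma> A * tt_weight m r \<mu> \<sigma> B = (?g A * ?g B) * (real (?b A) * real (?b B))"
    by (simp add: tt_weight_def ac_simps)
  also have "\<dots> = real (r q) * (tt_weight m r \<mu> \<sigma> C * tt_weight m r \<mu> \<sigma> D)"
    unfolding moments bond_counts by (simp add: tt_weight_def ac_simps)
  finally have "tt_weight m r \<mu> \<sigma> A * tt_weight m r \<mu> \<sigma> B
      = real (r q) * (tt_weight m r \<mu> \<sigma> C * tt_weight m r \<mu> \<sigma> D)" .
  moreover have "tt_weight m r \<mu> \<sigma> C * tt_weight m r \<mu> \<sigma> D \<noteq> 0"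
    using tt_weight_nonzero[OF \<mu> \<sigma> r] by simp
  ultimately show ?thesis
    by (simp add: field_simps)
qed

lemma first_bond_tt_weight_ratio:
  assumes \<mu>: "\<And>p. p \<in> {1..m} \<Longrightarrow> \<mu> p \<noteq> 0" and \<sigma>: "\<And>p. p \<in> {1..m} \<Longrightarrow> \<sigma> p \<noteq> 0"
    and r: "\<And>j. j \<in> {1..<m} \<Longrightarrow> r j \<ge> 1" and m: "3 \<le> m"
  shows "real (r 1) = tt_weight m r \<mu> \<sigma> {1, 2} * tt_weight m r \<mu> \<sigma> {3}
                       / (tt_weight m r \<mu> \<sigma> {2} * tt_weight m r \<mu> \<sigma> {1, 3})"
proof (rule tt_weight_cross_ratio[OF \<mu> \<sigma> r])
  show "1 \<in> {1..<m}"
    using m by simp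
  show "(p \<in> {1, 2} \<inter> {3} \<longleftrightarrow> p \<in> {2} \<inter> {1, 3}) \<and> (p \<in> {1, 2} \<union> {3} \<longleftrightarrow> p \<in> {2} \<union> {1, 3})" for p :: nat
    by auto
  fix j assume "j \<in> {1..<m}"
  then consider "j = 1" | "j = 2" | "j = 3" | "j \<ge> 4"
    by force
  then show "bond_multiplicity r {1, 2} j * bond_multiplicity r {3} j
      = (if j = 1 then r 1 else 1) * (bond_multiplicity r {2} j * bond_multiplicity r {1, 3} j)"
    by cases (simp_all add: bond_multiplicity_def power2_eq_square)
qed

lemma last_bond_tt_weight_ratio:
  assumes \<mu>: "\<And>p. p \<in> {1..m} \<Longrightarrow> \<mu> p \<noteq> 0" and \<sigma>: "\<And>p. p \<in> {1..m} \<Longrightarrow> \<sigma> p \<noteq> 0"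
    and r: "\<And>j. j \<in> {1..<m} \<Longrightarrow> r j \<ge> 1" and m: "4 \<le> m"
  shows "real (r (m - 1)) = tt_weight m r \<mu> \<sigma> {m - 1, m} * tt_weight m r \<mu> \<sigma> {m - 3}
                       / (tt_weight m r \<mu> \<sigma> {m} * tt_weight m r \<mu> \<sigma> {m - 3, m - 1})"
proof (rule tt_weight_cross_ratio[OF \<mu> \<sigma> r])
  show "m - 1 \<in> {1..<m}"
    using m by simp
  show "(p \<in> {m - 1, m} \<inter> {m - 3} \<longleftrightarrow> p \<in> {m} \<inter> {m - 3, m - 1})
      \<and> (p \<in> {m - 1, m} \<union> {m - 3} \<longleftrightarrow> p \<in> {m} \<union> {m - 3, m - 1})" for p
    using m by auto
  obtain l where l: "m = l + 4"
    using m by (metis add.commute le_Suc_ex)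
  fix j assume "j \<in> {1..<m}"
  then have "j < l + 4"
    by (simp add: l)
  then consider "j = l + 3" | "j = l + 2" | "j = l + 1" | "j = l" | "j < l"
    by linarith
  then show "bond_multiplicity r {m - 1, m} j * bond_multiplicity r {m - 3} j
      = (if j = m - 1 then r (m - 1) else 1) * (bond_multiplicity r {m} j * bond_multiplicity r {m - 3, m - 1} j)"
    unfolding l by cases (simp_all add: bond_multiplicity_def power2_eq_square add.commute)
qed

lemma alternating_sum_nonempty_subset_sums:
  fixes W :: "'a set \<Rightarrow> 'b::ring_1"
  assumes "finite S" "S \<noteq> {}"
  shows "(\<Sum>S'\<in>Pow S. (-1) ^ (card S - card S') * (\<Sum>T\<in>Pow S' - {{}}. W T)) = W S"
proof -
  define f where "f T = (if T = {} then 0 else W T)" for T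
  have "(\<Sum>T\<in>Pow S' - {{}}. W T) = sum f (Pow S')" if "finite S'" for S'
  proof -
    have "sum f (Pow S') = f {} + sum f (Pow S' - {{}})"
      using that by (intro sum.remove) auto
    also have "sum f (Pow S' - {{}}) = (\<Sum>T\<in>Pow S' - {{}}. W T)"
      by (rule sum.cong) (auto simp: f_def)
    finally show ?thesis
      by (simp add: f_def)
  qed
  then have "f S = (\<Sum>S'\<in>Pow S. (-1) ^ (card S - card S') * (\<Sum>T\<in>Pow S' - {{}}. W T))"
    by (intro inclusion_exclusion_mobius assms(1))
  with assms(2) show ?thesis
    by (simp add: f_def)
qed

section \<open>Moments of the tensor train\<close>

definition core_entry :: "(nat \<Rightarrow> nat \<Rightarrow> nat \<Rightarrow> nat \<Rightarrow> 'a \<Rightarrow> real) \<Rightarrow> nat \<times> nat \<times> nat \<times> nat \<Rightarrow> 'a \<Rightarrow> real"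
  where "core_entry \<theta> e = \<theta> (fst e) (fst (snd e)) (fst (snd (snd e))) (snd (snd (snd e)))"

definition path_entry :: "(nat \<Rightarrow> nat) \<Rightarrow> (nat \<Rightarrow> nat) \<Rightarrow> nat \<Rightarrow> nat \<times> nat \<times> nat \<times> nat" where
  "path_entry i k p = (p, k (p - 1), i p, k p)"

lemma tt_eta_eq_sum_path_products:
  "tt_eta m r \<theta> i = (\<lambda>\<omega>. \<Sum>k\<in>bond_tuples m r. \<Prod>p\<in>{1..m}. core_entry \<theta> (path_entry i k p) \<omega>)"
  by (simp add: fun_eq_iff tt_eta_def core_entry_def path_entry_def)

lemma path_entry_in_core_entries:
  assumes i: "i \<in> multi_idx m n" and k: "k \<in> bond_tuples m r" and p: "p \<in> {1..m}"
  shows "path_entry i k p \<in> core_entries m n r"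
proof -
  have "i p < (if p \<in> {1..m} then n p else 1)"
    using i unfolding multi_idx_def by blast
  moreover have "k (p - 1) < bond m r (p - 1)" "k p < bond m r p"
    using k unfolding bond_tuples_def by blast+
  ultimately show ?thesis
    using p by (simp add: path_entry_def core_entries_def)
qed

lemma path_entry_eq_iff:
  assumes "p \<in> {1..m}" "agree_on m S i j"
  shows "path_entry i k p = path_entry j k' p \<longleftrightarrow> p \<in> S \<and> agree_at_cores {p} k k'"
  using assms by (auto simp: path_entry_def agree_on_def agree_at_cores_def)

(* Groups a product over the entries used by two paths core by core; an entry used by both is squared. *)
lemma prod_Un_image_pairs:
  fixes e e' :: "'i \<Rightarrow> 'x" and pos :: "'x \<Rightarrow> 'i" and h :: "'x \<Rightarrow> nat \<Rightarrow> 'b::comm_monoid_mult"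
  assumes A: "finite A" and pos: "\<And>p. p \<in> A \<Longrightarrow> pos (e p) = p \<and> pos (e' p) = p"
  shows "(\<Prod>x\<in>e ` A \<union> e' ` A. h x (if e (pos x) = e' (pos x) then 2 else 1))
       = (\<Prod>p\<in>A. if e p = e' p then h (e p) 2 else h (e p) 1 * h (e' p) 1)"
proof -
  have "e ` A \<union> e' ` A = (\<Union>p\<in>A. {e p, e' p})"
    by auto
  moreover have "{e p, e' p} \<inter> {e q, e' q} = {}" if "p \<in> A" "q \<in> A" "p \<noteq> q" for p q
    using pos[OF that(1)] pos[OF that(2)] that(3) by auto
  ultimately have "(\<Prod>x\<in>e ` A \<union> e' ` A. h x (if e (pos x) = e' (pos x) then 2 else 1))
      = (\<Prod>p\<in>A. \<Prod>x\<in>{e p, e' p}. h x (if e (pos x) = e' (pos x) then 2 else 1))"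
    using A by (simp add: prod.UNION_disjoint)
  also have "\<dots> = (\<Prod>p\<in>A. if e p = e' p then h (e p) 2 else h (e p) 1 * h (e' p) 1)"
    using pos by (intro prod.cong) auto
  finally show ?thesis .
qed

lemma prod_path_pair_eq_prod_powers:
  fixes f :: "nat \<times> nat \<times> nat \<times> nat \<Rightarrow> 'b::comm_monoid_mult"
  shows "(\<Prod>p\<in>{1..m}. f (path_entry i k p) * f (path_entry j k' p))
       = (\<Prod>x\<in>path_entry i k ` {1..m} \<union> path_entry j k' ` {1..m}.
            f x ^ (if path_entry i k (fst x) = path_entry j k' (fst x) then 2 else 1))"
proof -
  have "(\<Prod>x\<in>path_entry i k ` {1..m} \<union> path_entry j k' ` {1..m}.
          f x ^ (if path_entry i k (fst x) = path_entry j k' (fst x) then 2 else 1))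
      = (\<Prod>p\<in>{1..m}. if path_entry i k p = path_entry j k' p then f (path_entry i k p) ^ 2
          else f (path_entry i k p) ^ 1 * f (path_entry j k' p) ^ 1)"
    by (rule prod_Un_image_pairs[where h = "\<lambda>x d. f x ^ d" and pos = fst]) (simp_all add: path_entry_def)
  also have "\<dots> = (\<Prod>p\<in>{1..m}. f (path_entry i k p) * f (path_entry j k' p))"
    by (intro prod.cong) (auto simp: power2_eq_square)
  finally show ?thesis
    by simp
qed

lemma (in prob_space) cov_eq_expectation_mult_minus:
  fixes X Z :: "'a \<Rightarrow> real"
  assumes X: "integrable M X" and Z: "integrable M Z" and XZ: "integrable M (\<lambda>\<omega>. X \<omega> * Z \<omega>)"
  shows "cov M X Z = expectation (\<lambda>\<omega>. X \<omega> * Z \<omega>) - expectation X * expectation Z"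
proof -
  let ?a = "expectation X" and ?b = "expectation Z"
  have "(\<lambda>\<omega>. (X \<omega> - ?a) * (Z \<omega> - ?b)) = (\<lambda>\<omega>. X \<omega> * Z \<omega> - (?b * X \<omega> + (?a * Z \<omega> - ?a * ?b)))"
    by (simp add: fun_eq_iff algebra_simps)
  moreover have "integrable M (\<lambda>\<omega>. ?b * X \<omega> + (?a * Z \<omega> - ?a * ?b))"
    using X Z by auto
  moreover have "expectation (\<lambda>\<omega>. ?b * X \<omega> + (?a * Z \<omega> - ?a * ?b)) = ?a * ?b"
    using X Z by (simp add: prob_space)
  ultimately show ?thesis
    using XZ by (simp add: cov_def)
qed

locale tt_cores = prob_space P for P :: "'a measure" +
  fixes m :: nat and n r :: "nat \<Rightarrow> nat"
    and \<theta> :: "nat \<Rightarrow> nat \<Rightarrow> nat \<Rightarrow> nat \<Rightarrow> 'a \<Rightarrow> real"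
    and \<mu> \<sigma> :: "nat \<Rightarrow> real"
  assumes core_entry_measurable: "\<And>e. e \<in> core_entries m n r \<Longrightarrow> core_entry \<theta> e \<in> borel_measurable P"
    and core_entries_indep: "indep_vars (\<lambda>_. borel) (core_entry \<theta>) (core_entries m n r)"
    and core_square_integrable: "\<And>p a i b. (p, a, i, b) \<in> core_entries m n r \<Longrightarrow>
        integrable P (\<lambda>\<omega>. (\<theta> p a i b \<omega>)\<^sup>2)"
    and core_mean: "\<And>p a i b. (p, a, i, b) \<in> core_entries m n r \<Longrightarrow>
        (\<integral>\<omega>. \<theta> p a i b \<omega> \<partial>P) = \<mu> p"
    and core_variance: "\<And>p a i b. (p, a, i, b) \<in> core_entries m n r \<Longrightarrow>
        (\<integral>\<omega>. (\<theta> p a i b \<omega> - \<mu> p)\<^sup>2 \<partial>P) = (\<sigma> p)\<^sup>2"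
begin

lemma core_entry_moments:
  assumes "e \<in> core_entries m n r"
  shows core_entry_square_integrable: "integrable P (\<lambda>\<omega>. (core_entry \<theta> e \<omega>)\<^sup>2)"
    and core_entry_integrable: "integrable P (core_entry \<theta> e)"
    and expectation_core_entry: "expectation (core_entry \<theta> e) = \<mu> (fst e)"
    and second_moment_core_entry: "expectation (\<lambda>\<omega>. (core_entry \<theta> e \<omega>)\<^sup>2) = (\<mu> (fst e))\<^sup>2 + (\<sigma> (fst e))\<^sup>2"
proof -
  obtain p a i b where e: "e = (p, a, i, b)"
    by (cases e)
  show square: "integrable P (\<lambda>\<omega>. (core_entry \<theta> e \<omega>)\<^sup>2)"
    using core_square_integrable assms by (simp add: e core_entry_def)
  show int: "integrable P (core_entry \<theta> e)"
    using core_entry_measurable[OF assms] square by (rule square_integrable_imp_integrable)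
  show mean: "expectation (core_entry \<theta> e) = \<mu> (fst e)"
    using core_mean assms by (simp add: e core_entry_def)
  have "variance (core_entry \<theta> e) = (\<sigma> (fst e))\<^sup>2"
    using core_variance core_mean assms by (simp add: e core_entry_def)
  then show "expectation (\<lambda>\<omega>. (core_entry \<theta> e \<omega>)\<^sup>2) = (\<mu> (fst e))\<^sup>2 + (\<sigma> (fst e))\<^sup>2"
    using variance_eq[OF int square] mean by simp
qed

lemma core_entry_powers_indep:
  assumes E: "finite E" "E \<subseteq> core_entries m n r" and d: "\<And>e. e \<in> E \<Longrightarrow> d e \<in> {1, 2}"
  shows integrable_prod_core_entry_powers: "integrable P (\<lambda>\<omega>. \<Prod>e\<in>E. core_entry \<theta> e \<omega> ^ d e)"
    and expectation_prod_core_entry_powers: "expectation (\<lambda>\<omega>. \<Prod>e\<in>E. core_entry \<theta> e \<omega> ^ d e)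
          = (\<Prod>e\<in>E. expectation (\<lambda>\<omega>. core_entry \<theta> e \<omega> ^ d e))"
proof -
  have indep: "indep_vars (\<lambda>_. borel) (\<lambda>e \<omega>. core_entry \<theta> e \<omega> ^ d e) E"
    by (rule indep_vars_compose2[OF indep_vars_subset[OF core_entries_indep E(2)], where Y = "\<lambda>e x. x ^ d e"])
      measurable
  have int: "integrable P (\<lambda>\<omega>. core_entry \<theta> e \<omega> ^ d e)" if "e \<in> E" for e
    using d[OF that] core_entry_integrable[of e] core_entry_square_integrable[of e] E(2) that by auto
  show "integrable P (\<lambda>\<omega>. \<Prod>e\<in>E. core_entry \<theta> e \<omega> ^ d e)"
    by (rule indep_vars_integrable[OF E(1) indep int])
  show "expectation (\<lambda>\<omega>. \<Prod>e\<in>E. core_entry \<theta> e \<omega> ^ d e)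
      = (\<Prod>e\<in>E. expectation (\<lambda>\<omega>. core_entry \<theta> e \<omega> ^ d e))"
    by (rule indep_vars_lebesgue_integral[OF E(1) indep int])
qed

lemma path_product_moments:
  assumes i: "i \<in> multi_idx m n" and k: "k \<in> bond_tuples m r"
  shows integrable_path_product: "integrable P (\<lambda>\<omega>. \<Prod>p\<in>{1..m}. core_entry \<theta> (path_entry i k p) \<omega>)"
    and expectation_path_product:
      "expectation (\<lambda>\<omega>. \<Prod>p\<in>{1..m}. core_entry \<theta> (path_entry i k p) \<omega>) = (\<Prod>p\<in>{1..m}. \<mu> p)"
proof -
  let ?E = "path_entry i k ` {1..m}"
  have inj: "inj_on (path_entry i k) {1..m}"
    by (auto simp: inj_on_def path_entry_def)
  have E: "finite ?E" "?E \<subseteq> core_entries m n r"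
    using path_entry_in_core_entries[OF i k] by auto
  have reindex: "(\<Prod>p\<in>{1..m}. core_entry \<theta> (path_entry i k p) \<omega>) = (\<Prod>e\<in>?E. core_entry \<theta> e \<omega> ^ 1)" for \<omega>
    by (subst prod.reindex[OF inj]) (simp add: comp_def)
  show "integrable P (\<lambda>\<omega>. \<Prod>p\<in>{1..m}. core_entry \<theta> (path_entry i k p) \<omega>)"
    unfolding reindex by (rule integrable_prod_core_entry_powers[OF E]) simp
  have "expectation (\<lambda>\<omega>. \<Prod>p\<in>{1..m}. core_entry \<theta> (path_entry i k p) \<omega>)
      = (\<Prod>e\<in>?E. expectation (\<lambda>\<omega>. core_entry \<theta> e \<omega> ^ 1))"
    unfolding reindex by (rule expectation_prod_core_entry_powers[OF E]) simp
  also have "\<dots> = (\<Prod>p\<in>{1..m}. expectation (core_entry \<theta> (path_entry i k p)))"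
    by (subst prod.reindex[OF inj]) (simp add: comp_def)
  also have "\<dots> = (\<Prod>p\<in>{1..m}. \<mu> p)"
    using expectation_core_entry[OF path_entry_in_core_entries[OF i k]]
    by (intro prod.cong) (simp_all add: path_entry_def)
  finally show "expectation (\<lambda>\<omega>. \<Prod>p\<in>{1..m}. core_entry \<theta> (path_entry i k p) \<omega>) = (\<Prod>p\<in>{1..m}. \<mu> p)" .
qed

lemma expectation_core_entry_pair_grouped:
  assumes e: "e \<in> core_entries m n r" and e': "e' \<in> core_entries m n r" and p: "fst e = p" "fst e' = p"
  shows "(if e = e' then expectation (\<lambda>\<omega>. core_entry \<theta> e \<omega> ^ 2)
          else expectation (\<lambda>\<omega>. core_entry \<theta> e \<omega> ^ 1) * expectation (\<lambda>\<omega>. core_entry \<theta> e' \<omega> ^ 1))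
       = (\<mu> p)\<^sup>2 + (if e = e' then (\<sigma> p)\<^sup>2 else 0)"
proof (cases "e = e'")
  case True
  then show ?thesis
    using second_moment_core_entry[OF e] p by simp
next
  case False
  then show ?thesis
    using expectation_core_entry[OF e] expectation_core_entry[OF e'] p by (simp add: power2_eq_square)
qed

lemma path_pair_product_moments:
  assumes i: "i \<in> multi_idx m n" and k: "k \<in> bond_tuples m r"
    and j: "j \<in> multi_idx m n" and k': "k' \<in> bond_tuples m r"
  shows integrable_path_pair_product: "integrable P
      (\<lambda>\<omega>. \<Prod>p\<in>{1..m}. core_entry \<theta> (path_entry i k p) \<omega> * core_entry \<theta> (path_entry j k' p) \<omega>)"
    and expectation_path_pair_product: "expectation
      (\<lambda>\<omega>. \<Prod>p\<in>{1..m}. core_entry \<theta> (path_entry i k p) \<omega> * core_entry \<theta> (path_entry j k' p) \<omega>)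
      = (\<Prod>p\<in>{1..m}. (\<mu> p)\<^sup>2 + (if path_entry i k p = path_entry j k' p then (\<sigma> p)\<^sup>2 else 0))"
proof -
  let ?e = "path_entry i k" and ?e' = "path_entry j k'"
  let ?E = "?e ` {1..m} \<union> ?e' ` {1..m}"
  define d :: "nat \<times> nat \<times> nat \<times> nat \<Rightarrow> nat" where "d x = (if ?e (fst x) = ?e' (fst x) then 2 else 1 :: nat)" for x
  have pos: "fst (?e p) = p \<and> fst (?e' p) = p" for p
    by (simp add: path_entry_def)
  have E: "finite ?E" "?E \<subseteq> core_entries m n r"
    using path_entry_in_core_entries[OF i k] path_entry_in_core_entries[OF j k'] by auto
  have d: "d x \<in> {1, 2}" for x
    by (simp add: d_def)
  have regroup: "(\<Prod>p\<in>{1..m}. core_entry \<theta> (?e p) \<omega> * core_entry \<theta> (?e' p) \<omega>)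
      = (\<Prod>x\<in>?E. core_entry \<theta> x \<omega> ^ d x)" for \<omega>
    unfolding d_def by (rule prod_path_pair_eq_prod_powers)
  show "integrable P (\<lambda>\<omega>. \<Prod>p\<in>{1..m}. core_entry \<theta> (?e p) \<omega> * core_entry \<theta> (?e' p) \<omega>)"
    unfolding regroup by (rule integrable_prod_core_entry_powers[OF E d])
  have "expectation (\<lambda>\<omega>. \<Prod>p\<in>{1..m}. core_entry \<theta> (?e p) \<omega> * core_entry \<theta> (?e' p) \<omega>)
      = (\<Prod>x\<in>?E. expectation (\<lambda>\<omega>. core_entry \<theta> x \<omega> ^ d x))"
    unfolding regroup by (rule expectation_prod_core_entry_powers[OF E d])
  also have "\<dots> = (\<Prod>p\<in>{1..m}. if ?e p = ?e' p then expectation (\<lambda>\<omega>. core_entry \<theta> (?e p) \<omega> ^ 2)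
      else expectation (\<lambda>\<omega>. core_entry \<theta> (?e p) \<omega> ^ 1) * expectation (\<lambda>\<omega>. core_entry \<theta> (?e' p) \<omega> ^ 1))"
    unfolding d_def
    by (rule prod_Un_image_pairs[where h = "\<lambda>x d. expectation (\<lambda>\<omega>. core_entry \<theta> x \<omega> ^ d)" and pos = fst])
      (simp_all add: pos)
  also have "\<dots> = (\<Prod>p\<in>{1..m}. (\<mu> p)\<^sup>2 + (if ?e p = ?e' p then (\<sigma> p)\<^sup>2 else 0))"
    by (intro prod.cong refl expectation_core_entry_pair_grouped
        path_entry_in_core_entries[OF i k] path_entry_in_core_entries[OF j k']) (simp_all add: pos)
  finally show "expectation (\<lambda>\<omega>. \<Prod>p\<in>{1..m}. core_entry \<theta> (?e p) \<omega> * core_entry \<theta> (?e' p) \<omega>)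
      = (\<Prod>p\<in>{1..m}. (\<mu> p)\<^sup>2 + (if ?e p = ?e' p then (\<sigma> p)\<^sup>2 else 0))" .
qed

lemma tt_eta_moments:
  assumes i: "i \<in> multi_idx m n"
  shows integrable_tt_eta: "integrable P (tt_eta m r \<theta> i)"
    and expectation_tt_eta: "expectation (tt_eta m r \<theta> i) = (\<Sum>k\<in>bond_tuples m r. \<Prod>p\<in>{1..m}. \<mu> p)"
proof -
  let ?f = "\<lambda>k \<omega>. \<Prod>p\<in>{1..m}. core_entry \<theta> (path_entry i k p) \<omega>"
  show "integrable P (tt_eta m r \<theta> i)"
    unfolding tt_eta_eq_sum_path_products by (intro Bochner_Integration.integrable_sum integrable_path_product[OF i])
  have "expectation (tt_eta m r \<theta> i) = (\<Sum>k\<in>bond_tuples m r. expectation (?f k))"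
    unfolding tt_eta_eq_sum_path_products by (intro Bochner_Integration.integral_sum integrable_path_product[OF i])
  also have "\<dots> = (\<Sum>k\<in>bond_tuples m r. \<Prod>p\<in>{1..m}. \<mu> p)"
    by (intro sum.cong refl expectation_path_product[OF i])
  finally show "expectation (tt_eta m r \<theta> i) = (\<Sum>k\<in>bond_tuples m r. \<Prod>p\<in>{1..m}. \<mu> p)" .
qed

lemma tt_eta_mult_moments:
  assumes i: "i \<in> multi_idx m n" and j: "j \<in> multi_idx m n"
  shows integrable_tt_eta_mult: "integrable P (\<lambda>\<omega>. tt_eta m r \<theta> i \<omega> * tt_eta m r \<theta> j \<omega>)"
    and expectation_tt_eta_mult: "expectation (\<lambda>\<omega>. tt_eta m r \<theta> i \<omega> * tt_eta m r \<theta> j \<omega>)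
      = (\<Sum>k\<in>bond_tuples m r. \<Sum>k'\<in>bond_tuples m r.
           \<Prod>p\<in>{1..m}. (\<mu> p)\<^sup>2 + (if path_entry i k p = path_entry j k' p then (\<sigma> p)\<^sup>2 else 0))"
proof -
  let ?F = "\<lambda>k k' \<omega>. \<Prod>p\<in>{1..m}. core_entry \<theta> (path_entry i k p) \<omega> * core_entry \<theta> (path_entry j k' p) \<omega>"
  have expand: "(\<lambda>\<omega>. tt_eta m r \<theta> i \<omega> * tt_eta m r \<theta> j \<omega>)
      = (\<lambda>\<omega>. \<Sum>k\<in>bond_tuples m r. \<Sum>k'\<in>bond_tuples m r. ?F k k' \<omega>)"
    by (simp add: tt_eta_eq_sum_path_products sum_product prod.distrib)
  have inner: "integrable P (\<lambda>\<omega>. \<Sum>k'\<in>bond_tuples m r. ?F k k' \<omega>)" if "k \<in> bond_tuples m r" for k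
    using integrable_path_pair_product[OF i that j] by simp
  show "integrable P (\<lambda>\<omega>. tt_eta m r \<theta> i \<omega> * tt_eta m r \<theta> j \<omega>)"
    unfolding expand using inner by simp
  have "expectation (\<lambda>\<omega>. tt_eta m r \<theta> i \<omega> * tt_eta m r \<theta> j \<omega>)
      = (\<Sum>k\<in>bond_tuples m r. \<Sum>k'\<in>bond_tuples m r. expectation (?F k k'))"
    unfolding expand using inner integrable_path_pair_product[OF i _ j]
    by (simp add: Bochner_Integration.integral_sum)
  also have "\<dots> = (\<Sum>k\<in>bond_tuples m r. \<Sum>k'\<in>bond_tuples m r.
      \<Prod>p\<in>{1..m}. (\<mu> p)\<^sup>2 + (if path_entry i k p = path_entry j k' p then (\<sigma> p)\<^sup>2 else 0))"
    by (intro sum.cong refl expectation_path_pair_product[OF i _ j])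
  finally show "expectation (\<lambda>\<omega>. tt_eta m r \<theta> i \<omega> * tt_eta m r \<theta> j \<omega>)
      = (\<Sum>k\<in>bond_tuples m r. \<Sum>k'\<in>bond_tuples m r.
           \<Prod>p\<in>{1..m}. (\<mu> p)\<^sup>2 + (if path_entry i k p = path_entry j k' p then (\<sigma> p)\<^sup>2 else 0))" .
qed

lemma cov_tt_eta:
  assumes i: "i \<in> multi_idx m n" and j: "j \<in> multi_idx m n"
    and S: "S \<subseteq> {1..m}" and agree: "agree_on m S i j"
  shows "cov P (tt_eta m r \<theta> i) (tt_eta m r \<theta> j) = (\<Sum>T\<in>Pow S - {{}}. tt_weight m r \<mu> \<sigma> T)"
proof -
  let ?B = "bond_tuples m r"
  have "cov P (tt_eta m r \<theta> i) (tt_eta m r \<theta> j)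
      = (\<Sum>k\<in>?B. \<Sum>k'\<in>?B. \<Prod>p\<in>{1..m}. (\<mu> p)\<^sup>2 + (if path_entry i k p = path_entry j k' p then (\<sigma> p)\<^sup>2 else 0))
        - (\<Sum>k\<in>?B. \<Sum>k'\<in>?B. \<Prod>p\<in>{1..m}. (\<mu> p)\<^sup>2)"
    by (simp add: cov_eq_expectation_mult_minus integrable_tt_eta i j integrable_tt_eta_mult
        expectation_tt_eta_mult expectation_tt_eta sum_product power2_eq_square flip: prod.distrib)
  also have "\<dots> = (\<Sum>(k, k')\<in>?B \<times> ?B.
      (\<Prod>p\<in>{1..m}. (\<mu> p)\<^sup>2 + (if p \<in> S \<and> agree_at_cores {p} k k' then (\<sigma> p)\<^sup>2 else 0))
      - (\<Prod>p\<in>{1..m}. (\<mu> p)\<^sup>2))"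
    unfolding sum.cartesian_product[symmetric] sum_subtractf[symmetric]
    by (intro sum.cong refl arg_cong2[where f = "(-)"] prod.cong) (simp add: path_entry_eq_iff[OF _ agree])
  also have "\<dots> = (\<Sum>T\<in>Pow S - {{}}. tt_weight m r \<mu> \<sigma> T)"
    by (rule sum_bond_pairs_moment_excess[OF S])
  finally show ?thesis .
qed

end

section \<open>Observations\<close>

lemma (in prob_space) sigma_finite_subalgebra_gen_sigma:
  assumes X: "\<And>i. i \<in> I \<Longrightarrow> X i \<in> borel_measurable M"
  shows "sigma_finite_subalgebra M (gen_sigma M X I)"
proof -
  let ?G = "{X i -` A \<inter> space M | i A. i \<in> I \<and> A \<in> sets (borel :: real measure)}"
  have G: "?G \<subseteq> sets M"
    using X by (auto intro: measurable_sets)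
  then have "?G \<subseteq> Pow (space M)"
    using sets.sets_into_space by blast
  then have "subalgebra M (gen_sigma M X I)"
    unfolding subalgebra_def gen_sigma_def
    by (simp add: space_measure_of_conv sets_measure_of sets.sigma_sets_subset[OF G])
  then have "finite_measure_subalgebra M (gen_sigma M X I)"
    by (simp add: finite_measure_subalgebra_def finite_measure_subalgebra_axioms_def finite_measure_axioms)
  then show ?thesis
    by (rule finite_measure_subalgebra_is_sigma_finite)
qed

lemma (in sigma_finite_subalgebra) integral_eq_if_real_cond_exp_AE_eq:
  fixes X Z :: "'a \<Rightarrow> real"
  assumes "integrable M X" "Z \<in> borel_measurable M" "AE \<omega> in M. real_cond_exp M F X \<omega> = Z \<omega>"
  shows "(\<integral>\<omega>. X \<omega> \<partial>M) = (\<integral>\<omega>. Z \<omega> \<partial>M)"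
proof -
  have "(\<integral>\<omega>. X \<omega> \<partial>M) = (\<integral>\<omega>. real_cond_exp M F X \<omega> \<partial>M)"
    using real_cond_exp_int(2)[OF assms(1)] by simp
  also have "\<dots> = (\<integral>\<omega>. Z \<omega> \<partial>M)"
    by (rule integral_cong_AE[OF borel_measurable_cond_exp2 assms(2,3)])
  finally show ?thesis .
qed

lemma integrable_mult_of_square_integrable:
  fixes X Z :: "'a \<Rightarrow> real"
  assumes "X \<in> borel_measurable M" "Z \<in> borel_measurable M"
    and "integrable M (\<lambda>\<omega>. (X \<omega>)\<^sup>2)" "integrable M (\<lambda>\<omega>. (Z \<omega>)\<^sup>2)"
  shows "integrable M (\<lambda>\<omega>. X \<omega> * Z \<omega>)"
proof (rule Bochner_Integration.integrable_bound)
  show "integrable M (\<lambda>\<omega>. (X \<omega>)\<^sup>2 + (Z \<omega>)\<^sup>2)"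
    using assms(3,4) by simp
  show "(\<lambda>\<omega>. X \<omega> * Z \<omega>) \<in> borel_measurable M"
    using assms(1,2) by measurable
  have "\<bar>x * z\<bar> \<le> x\<^sup>2 + z\<^sup>2" for x z :: real
  proof -
    have "2 * (\<bar>x\<bar> * \<bar>z\<bar>) \<le> x\<^sup>2 + z\<^sup>2"
      using sum_squares_bound[of "\<bar>x\<bar>" "\<bar>z\<bar>"] by (simp add: mult.assoc)
    moreover have "0 \<le> \<bar>x\<bar> * \<bar>z\<bar>"
      by simp
    ultimately show ?thesis
      unfolding abs_mult by linarith
  qed
  then show "AE \<omega> in M. norm (X \<omega> * Z \<omega>) \<le> norm ((X \<omega>)\<^sup>2 + (Z \<omega>)\<^sup>2)"
    by simp
qed

locale tt_observations = tt_cores +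
  fixes Y :: "(nat \<Rightarrow> nat) \<Rightarrow> 'a \<Rightarrow> real"
  assumes mode_sizes: "\<And>p. p \<in> {1..m} \<Longrightarrow> n p \<ge> 2"
    and observation_measurable: "\<And>i. i \<in> multi_idx m n \<Longrightarrow> Y i \<in> borel_measurable P"
    and observation_square_integrable: "\<And>i. i \<in> multi_idx m n \<Longrightarrow> integrable P (\<lambda>\<omega>. (Y i \<omega>)\<^sup>2)"
    and observations_cond_indep:
      "cond_indep_given P (gen_sigma P (tt_eta m r \<theta>) (multi_idx m n)) Y (multi_idx m n)"
    and observation_cond_mean: "\<And>i. i \<in> multi_idx m n \<Longrightarrow>
      AE \<omega> in P. real_cond_exp P (gen_sigma P (tt_eta m r \<theta>) (multi_idx m n)) (Y i) \<omega> = tt_eta m r \<theta> i \<omega>"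
begin

abbreviation "eta_algebra \<equiv> gen_sigma P (tt_eta m r \<theta>) (multi_idx m n)"

lemma eta_algebra_sigma_finite: "sigma_finite_subalgebra P eta_algebra"
  using integrable_tt_eta by (intro sigma_finite_subalgebra_gen_sigma borel_measurable_integrable)

lemma integrable_observation: "i \<in> multi_idx m n \<Longrightarrow> integrable P (Y i)"
  using observation_measurable observation_square_integrable by (rule square_integrable_imp_integrable)

lemma integrable_observation_mult:
  "i \<in> multi_idx m n \<Longrightarrow> j \<in> multi_idx m n \<Longrightarrow> integrable P (\<lambda>\<omega>. Y i \<omega> * Y j \<omega>)"
  by (intro integrable_mult_of_square_integrable observation_measurable observation_square_integrable)

lemma expectation_observation:
  assumes i: "i \<in> multi_idx m n"
  shows "expectation (Y i) = expectation (tt_eta m r \<theta> i)"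
  using sigma_finite_subalgebra.integral_eq_if_real_cond_exp_AE_eq[OF eta_algebra_sigma_finite
      integrable_observation[OF i] borel_measurable_integrable[OF integrable_tt_eta[OF i]] observation_cond_mean[OF i]]
  by simp

lemma expectation_observation_mult:
  assumes i: "i \<in> multi_idx m n" and j: "j \<in> multi_idx m n" and ij: "i \<noteq> j"
  shows "expectation (\<lambda>\<omega>. Y i \<omega> * Y j \<omega>) = expectation (\<lambda>\<omega>. tt_eta m r \<theta> i \<omega> * tt_eta m r \<theta> j \<omega>)"
proof -
  have "AE \<omega> in P. real_cond_exp P eta_algebra (\<lambda>\<omega>. Y i \<omega> * Y j \<omega>) \<omega>
      = real_cond_exp P eta_algebra (Y i) \<omega> * real_cond_exp P eta_algebra (Y j) \<omega>"
    using observations_cond_indep[unfolded cond_indep_given_def, rule_format, of "{i, j}" "\<lambda>_ z. z"]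
      i j ij integrable_observation[OF i] integrable_observation[OF j] integrable_observation_mult[OF i j]
    by simp
  then have "AE \<omega> in P. real_cond_exp P eta_algebra (\<lambda>\<omega>. Y i \<omega> * Y j \<omega>) \<omega> = tt_eta m r \<theta> i \<omega> * tt_eta m r \<theta> j \<omega>"
    using observation_cond_mean[OF i] observation_cond_mean[OF j] by eventually_elim simp
  then show ?thesis
    by (intro sigma_finite_subalgebra.integral_eq_if_real_cond_exp_AE_eq[OF eta_algebra_sigma_finite]
        integrable_observation_mult[OF i j] borel_measurable_integrable integrable_tt_eta_mult[OF i j])
qed

lemma cov_observations:
  assumes i: "i \<in> multi_idx m n" and j: "j \<in> multi_idx m n" and ij: "i \<noteq> j"
  shows "cov P (Y i) (Y j) = cov P (tt_eta m r \<theta> i) (tt_eta m r \<theta> j)"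
  by (simp add: cov_eq_expectation_mult_minus i j integrable_observation integrable_observation_mult
      integrable_tt_eta integrable_tt_eta_mult expectation_observation expectation_observation_mult[OF i j ij])

(* For S = {1..m} the two multi-indices coincide and C_S is a variance, which also contains the noise of Y. *)
lemma C_cov_eq_sum_tt_weight:
  assumes S: "S \<subset> {1..m}"
  shows "C_cov P Y m n S = (\<Sum>T\<in>Pow S - {{}}. tt_weight m r \<mu> \<sigma> T)"
proof (cases "S = {}")
  case True
  then show ?thesis
    by (simp add: C_cov_def)
next
  case False
  define ij where
    "ij = (SOME ij. fst ij \<in> multi_idx m n \<and> snd ij \<in> multi_idx m n \<and> agree_on m S (fst ij) (snd ij))"
  have "\<exists>ij. fst ij \<in> multi_idx m n \<and> snd ij \<in> multi_idx m n \<and> agree_on m S (fst ij) (snd ij)"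
  proof (intro exI conjI)
    have "0 < n p" "1 < n p" if "p \<in> {1..m}" for p
      using mode_sizes[OF that] by simp_all
    then show "fst (\<lambda>_. 0, \<lambda>p. if p \<in> {1..m} - S then 1 else 0) \<in> multi_idx m n"
      and "snd (\<lambda>_. 0, \<lambda>p. if p \<in> {1..m} - S then 1 else 0) \<in> multi_idx m n"
      by (auto simp: multi_idx_def)
    show "agree_on m S (fst (\<lambda>_. 0, \<lambda>p. if p \<in> {1..m} - S then 1 else 0))
        (snd (\<lambda>_. 0, \<lambda>p. if p \<in> {1..m} - S then 1 else 0))"
      using S by (auto simp: agree_on_def)
  qed
  then have i: "fst ij \<in> multi_idx m n" and j: "snd ij \<in> multi_idx m n"
    and agree: "agree_on m S (fst ij) (snd ij)"
    unfolding ij_def by (metis (mono_tags, lifting) someI_ex)+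
  obtain p where "p \<in> {1..m}" "p \<notin> S"
    using S by blast
  with agree have ij: "fst ij \<noteq> snd ij"
    by (auto simp: agree_on_def)
  have "C_cov P Y m n S = cov P (Y (fst ij)) (Y (snd ij))"
    using False by (simp add: C_cov_def Let_def ij_def)
  also have "\<dots> = cov P (tt_eta m r \<theta> (fst ij)) (tt_eta m r \<theta> (snd ij))"
    by (rule cov_observations[OF i j ij])
  also have "\<dots> = (\<Sum>T\<in>Pow S - {{}}. tt_weight m r \<mu> \<sigma> T)"
    using S by (intro cov_tt_eta[OF i j _ agree]) auto
  finally show ?thesis .
qed

lemma v_mob_eq_tt_weight:
  assumes S: "S \<subset> {1..m}" "S \<noteq> {}"
  shows "v_mob P Y m n S = tt_weight m r \<mu> \<sigma> S"
proof -
  have "v_mob P Y m n S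
      = (\<Sum>S'\<in>Pow S. (-1) ^ (card S - card S') * (\<Sum>T\<in>Pow S' - {{}}. tt_weight m r \<mu> \<sigma> T))"
    unfolding v_mob_def using S(1) by (intro sum.cong refl arg_cong2[where f = "(*)"] C_cov_eq_sum_tt_weight) auto
  also have "\<dots> = tt_weight m r \<mu> \<sigma> S"
    using S by (intro alternating_sum_nonempty_subset_sums) (auto intro: finite_subset)
  finally show ?thesis .
qed

end

theorem mainTheorem9:
  fixes P :: "'a measure"
    and m :: nat
    and n r :: "nat \<Rightarrow> nat"
    and \<theta> :: "nat \<Rightarrow> nat \<Rightarrow> nat \<Rightarrow> nat \<Rightarrow> 'a \<Rightarrow> real"
    and \<mu> \<sigma> :: "nat \<Rightarrow> real"
    and Y :: "(nat \<Rightarrow> nat) \<Rightarrow> 'a \<Rightarrow> real"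
  assumes prob: "prob_space P"
    and n_ge: "\<And>p. p \<in> {1..m} \<Longrightarrow> n p \<ge> 2"
    and r_pos: "\<And>k. k \<in> {1..<m} \<Longrightarrow> r k \<ge> 1"
    and \<theta>_meas: "\<And>e. e \<in> core_entries m n r \<Longrightarrow>
        (\<lambda>\<omega>. \<theta> (fst e) (fst (snd e)) (fst (snd (snd e))) (snd (snd (snd e))) \<omega>) \<in> borel_measurable P"
    and \<theta>_indep: "prob_space.indep_vars P (\<lambda>_. borel)
        (\<lambda>e \<omega>. \<theta> (fst e) (fst (snd e)) (fst (snd (snd e))) (snd (snd (snd e))) \<omega>) (core_entries m n r)"
    and \<theta>_ident: "\<And>p a i b a' i' b'. (p, a, i, b) \<in> core_entries m n r \<Longrightarrow>
        (p, a', i', b') \<in> core_entries m n r \<Longrightarrow>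
        distr P borel (\<theta> p a i b) = distr P borel (\<theta> p a' i' b')"
    and \<theta>_sq: "\<And>p a i b. (p, a, i, b) \<in> core_entries m n r \<Longrightarrow>
        integrable P (\<lambda>\<omega>. (\<theta> p a i b \<omega>)\<^sup>2)"
    and \<theta>_mean: "\<And>p a i b. (p, a, i, b) \<in> core_entries m n r \<Longrightarrow>
        (\<integral>\<omega>. \<theta> p a i b \<omega> \<partial>P) = \<mu> p"
    and \<theta>_var: "\<And>p a i b. (p, a, i, b) \<in> core_entries m n r \<Longrightarrow>
        (\<integral>\<omega>. (\<theta> p a i b \<omega> - \<mu> p)\<^sup>2 \<partial>P) = (\<sigma> p)\<^sup>2"
    and \<mu>_nz: "\<And>p. p \<in> {1..m} \<Longrightarrow> \<mu> p \<noteq> 0"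
    and \<sigma>_nz: "\<And>p. p \<in> {1..m} \<Longrightarrow> \<sigma> p \<noteq> 0"
    and Y_meas: "\<And>i. i \<in> multi_idx m n \<Longrightarrow> Y i \<in> borel_measurable P"
    and Y_sq: "\<And>i. i \<in> multi_idx m n \<Longrightarrow> integrable P (\<lambda>\<omega>. (Y i \<omega>)\<^sup>2)"
    and Y_cind: "cond_indep_given P (gen_sigma P (tt_eta m r \<theta>) (multi_idx m n)) Y (multi_idx m n)"
    and Y_mean: "\<And>i. i \<in> multi_idx m n \<Longrightarrow>
        AE \<omega> in P. real_cond_exp P (gen_sigma P (tt_eta m r \<theta>) (multi_idx m n)) (Y i) \<omega>
                    = tt_eta m r \<theta> i \<omega>"
  shows "(3 \<le> m \<longrightarrow>
            real (r 1) = v_mob P Y m n {1, 2} * v_mob P Y m n {3}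
                         / (v_mob P Y m n {2} * v_mob P Y m n {1, 3}))
       \<and> (4 \<le> m \<longrightarrow>
            real (r (m - 1)) = v_mob P Y m n {m - 1, m} * v_mob P Y m n {m - 3}
                         / (v_mob P Y m n {m} * v_mob P Y m n {m - 3, m - 1}))"
proof -
  have core_measurable: "\<And>e. e \<in> core_entries m n r \<Longrightarrow> core_entry \<theta> e \<in> borel_measurable P"
    unfolding core_entry_def by (rule \<theta>_meas)
  have core_indep: "prob_space.indep_vars P (\<lambda>_. borel) (core_entry \<theta>) (core_entries m n r)"
    unfolding core_entry_def[abs_def] by (rule \<theta>_indep)
  interpret tt_observations P m n r \<theta> \<mu> \<sigma> Y
    by (rule tt_observations.intro[OF
          tt_cores.intro[OF prob tt_cores_axioms.intro[OF core_measurable core_indep \<theta>_sq \<theta>_mean \<theta>_var]]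
          tt_observations_axioms.intro[OF n_ge Y_meas Y_sq Y_cind Y_mean]])
  have proper: "S \<subset> {1..m}" if "S \<subseteq> {1..m}" "card S < m" for S
    using that by (auto simp: psubset_eq)
  show ?thesis
  proof (intro conjI impI)
    assume m: "3 \<le> m"
    have "v_mob P Y m n S = tt_weight m r \<mu> \<sigma> S" if "S \<in> {{1, 2}, {3}, {2}, {1, 3}}" for S
      using that m by (auto intro!: v_mob_eq_tt_weight proper)
    then show "real (r 1) = v_mob P Y m n {1, 2} * v_mob P Y m n {3}
                         / (v_mob P Y m n {2} * v_mob P Y m n {1, 3})"
      using first_bond_tt_weight_ratio[OF \<mu>_nz \<sigma>_nz r_pos m] by simp
  next
    assume m: "4 \<le> m"
    have "v_mob P Y m n S = tt_weight m r \<mu> \<sigma> S"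
      if "S \<in> {{m - 1, m}, {m - 3}, {m}, {m - 3, m - 1}}" for S
      using that m by (auto intro!: v_mob_eq_tt_weight proper)
    then show "real (r (m - 1)) = v_mob P Y m n {m - 1, m} * v_mob P Y m n {m - 3}
                         / (v_mob P Y m n {m} * v_mob P Y m n {m - 3, m - 1})"
      using last_bond_tt_weight_ratio[OF \<mu>_nz \<sigma>_nz r_pos m] by simp
  qed
qed

end
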